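(* Suppose $(\gamma^\sharp,\lambda^\sharp)$ is an eligible pair. Let $\lambda_{\rm Lasso}>\lambda^\sharp$ with $\lambda_{\rm Lasso}\|\gamma^\sharp\|_1\to0$, and let $$\gamma_{\rm Lasso}:=\arg\min_{c\in\mathbb{R}^{p-1}}\big\{\mathbb{E}(\mathbf{x}_1-\mathbf{x}_{-1}c)^2+2\lambda_{\rm Lasso}\|c\|_1\big\}$$ be the noiseless Lasso. Then $\|\Sigma_{-1,-1}^{1/2}(\gamma_{\rm Lasso}-\gamma^\sharp)\|_2^2\to0$. In addition, if $\lambda_{\rm Lasso}\ge2\lambda^\sharp$, then $(\gamma_{\rm Lasso},\lambda_{\rm Lasso})$ is an eligible pair.
   Context: Asymptotic framework: all quantities may depend on $n$; limits as $n\to\infty$. $\mathbf{x}=(\mathbf{x}_1,\dots,\mathbf{x}_p)$ is a zero-mean Gaussian row vector with nonsingular covariance $\Sigma$ (diagonal entries $1$, smallest eigenvalue bounded away from zero); $\mathbf{x}_{-1}=(\mathbf{x}_2,\dots,\mathbf{x}_p)$, $\Sigma_{-1,-1}=\mathbb{E}\mathbf{x}_{-1}^T\mathbf{x}_{-1}$, $\gamma^0:=\Sigma_{-1,-1}^{-1}\mathbb{E}\mathbf{x}_{-1}^T\mathbf{x}_1$. A pair $(\gamma,\lambda)$ with $\gamma\in\mathbb{R}^{p-1}$, $\lambda>0$ is eligible if $\|\Sigma_{-1,-1}(\gamma-\gamma^0)\|_\infty\le\lambda$ and $\lambda\|\gamma\|_1\to0$. *)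

theory Defs
  imports "HOL-Analysis.Analysis"
begin

(* Conventions: a p x p matrix is  S :: nat => nat => real  read on indices {0..<p};
   coordinate 0 is x_1, coordinates {1..<p} form x_{-1}.
   Vectors in R^{p-1} are functions  c :: nat => real  vanishing outside {1..<p}. *)

definition rvec :: "nat \<Rightarrow> (nat \<Rightarrow> real) set" where
  "rvec p = {c. \<forall>i. i \<notin> {1..<p} \<longrightarrow> c i = 0}"

definition is_eigenvalue :: "nat \<Rightarrow> (nat \<Rightarrow> nat \<Rightarrow> real) \<Rightarrow> real \<Rightarrow> bool" where
  "is_eigenvalue p S \<mu> \<longleftrightarrow> (\<exists>v. (\<forall>i. p \<le> i \<longrightarrow> v i = 0) \<and> (\<exists>i<p. v i \<noteq> 0)
       \<and> (\<forall>i<p. (\<Sum>j<p. S i j * v j) = \<mu> * v i))"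

definition nonsingular :: "nat \<Rightarrow> (nat \<Rightarrow> nat \<Rightarrow> real) \<Rightarrow> bool" where
  "nonsingular p S \<longleftrightarrow> (\<forall>v. (\<forall>i<p. (\<Sum>j<p. S i j * v j) = 0) \<longrightarrow> (\<forall>i<p. v i = 0))"

definition symmetric_mat :: "nat \<Rightarrow> (nat \<Rightarrow> nat \<Rightarrow> real) \<Rightarrow> bool" where
  "symmetric_mat p S \<longleftrightarrow> (\<forall>i<p. \<forall>j<p. S i j = S j i)"

definition SmulR :: "nat \<Rightarrow> (nat \<Rightarrow> nat \<Rightarrow> real) \<Rightarrow> (nat \<Rightarrow> real) \<Rightarrow> nat \<Rightarrow> real" where
  "SmulR p S c i = (\<Sum>j\<in>{1..<p}. S i j * c j)"

(* gamma^0 = Sigma_{-1,-1}^{-1} E x_{-1}^T x_1, the unique solution of Sigma_{-1,-1} g = Sigma_{-1,1} *)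
definition gamma0 :: "nat \<Rightarrow> (nat \<Rightarrow> nat \<Rightarrow> real) \<Rightarrow> nat \<Rightarrow> real" where
  "gamma0 p S = (THE g. g \<in> rvec p \<and> (\<forall>i\<in>{1..<p}. SmulR p S g i = S i 0))"

definition norm1 :: "nat \<Rightarrow> (nat \<Rightarrow> real) \<Rightarrow> real" where
  "norm1 p c = (\<Sum>i\<in>{1..<p}. \<bar>c i\<bar>)"

definition normInf :: "nat \<Rightarrow> (nat \<Rightarrow> real) \<Rightarrow> real" where
  "normInf p c = Max (insert 0 ((\<lambda>i. \<bar>c i\<bar>) ` {1..<p}))"

(* || Sigma_{-1,-1}^{1/2} v ||_2^2 = v^T Sigma_{-1,-1} v *)
definition quadS :: "nat \<Rightarrow> (nat \<Rightarrow> nat \<Rightarrow> real) \<Rightarrow> (nat \<Rightarrow> real) \<Rightarrow> real" where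
  "quadS p S v = (\<Sum>i\<in>{1..<p}. \<Sum>j\<in>{1..<p}. v i * S i j * v j)"

(* E (x_1 - x_{-1} c)^2 for a zero-mean vector x with covariance S *)
definition risk :: "nat \<Rightarrow> (nat \<Rightarrow> nat \<Rightarrow> real) \<Rightarrow> (nat \<Rightarrow> real) \<Rightarrow> real" where
  "risk p S c = S 0 0 - 2 * (\<Sum>i\<in>{1..<p}. c i * S i 0) + quadS p S c"

definition eligible :: "(nat \<Rightarrow> nat) \<Rightarrow> (nat \<Rightarrow> nat \<Rightarrow> nat \<Rightarrow> real)
    \<Rightarrow> (nat \<Rightarrow> nat \<Rightarrow> real) \<Rightarrow> (nat \<Rightarrow> real) \<Rightarrow> bool" where
  "eligible p S g lam \<longleftrightarrow>
     (\<forall>n. g n \<in> rvec (p n) \<and> 0 < lam n \<and>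
          normInf (p n) (SmulR (p n) (S n) (\<lambda>i. g n i - gamma0 (p n) (S n) i)) \<le> lam n)
     \<and> (\<lambda>n. lam n * norm1 (p n) (g n)) \<longlonglongrightarrow> 0"

end

theory Submission
  imports Defs "Jordan_Normal_Form.Determinant"
begin

(* Write Q(v) = v^T \<Sigma>_{-1,-1} v.  Expanding the risk around \<gamma>^\<sharp> and comparing the Lasso
   objective at \<gamma>_Lasso and at \<gamma>^\<sharp> gives the basic inequality
     Q(\<gamma>_Lasso - \<gamma>^\<sharp>) + 2 \<lambda>_Lasso |\<gamma>_Lasso|_1
        \<le> 2 \<lambda>_Lasso |\<gamma>^\<sharp>|_1 + 2 \<lambda>^\<sharp> (|\<gamma>_Lasso|_1 + |\<gamma>^\<sharp>|_1),
   because eligibility bounds the scores \<Sigma>_{-1,-1} \<gamma>^\<sharp> - \<Sigma>_{-1,1} = \<Sigma>_{-1,-1} (\<gamma>^\<sharp> - \<gamma>^0) by \<lambda>^\<sharp>.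
   As Q \<ge> 0, this yields Q(\<gamma>_Lasso - \<gamma>^\<sharp>) \<le> 4 \<lambda>_Lasso |\<gamma>^\<sharp>|_1 \<rightarrow> 0, and for \<lambda>_Lasso \<ge> 2 \<lambda>^\<sharp>
   also \<lambda>_Lasso |\<gamma>_Lasso|_1 \<le> 3 \<lambda>_Lasso |\<gamma>^\<sharp>|_1 \<rightarrow> 0.  The sup-norm bound on the scores of
   \<gamma>_Lasso is the KKT condition of the Lasso.  Positivity of Q and the existence of \<gamma>^0 both
   come from the eigenvalue bound through c |v|^2 \<le> v^T \<Sigma> v. *)

subsection \<open>Quadratic forms on finite index sets\<close>

definition mulv :: "nat set \<Rightarrow> (nat \<Rightarrow> nat \<Rightarrow> real) \<Rightarrow> (nat \<Rightarrow> real) \<Rightarrow> nat \<Rightarrow> real" where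
  "mulv K A v i = (\<Sum>j\<in>K. A i j * v j)"

definition bilin :: "nat set \<Rightarrow> (nat \<Rightarrow> nat \<Rightarrow> real) \<Rightarrow> (nat \<Rightarrow> real) \<Rightarrow> (nat \<Rightarrow> real) \<Rightarrow> real" where
  "bilin K A x y = (\<Sum>i\<in>K. x i * mulv K A y i)"

definition sqnorm :: "nat set \<Rightarrow> (nat \<Rightarrow> real) \<Rightarrow> real" where
  "sqnorm K x = (\<Sum>i\<in>K. (x i)\<^sup>2)"

lemma sqnorm_nonneg: "0 \<le> sqnorm K x"
  unfolding sqnorm_def by (simp add: sum_nonneg)

lemma bilin_commute:
  assumes "\<And>i j. i \<in> K \<Longrightarrow> j \<in> K \<Longrightarrow> A i j = A j i"
  shows "bilin K A y x = bilin K A x y"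
  unfolding bilin_def mulv_def sum_distrib_left
  by (subst sum.swap) (auto intro!: sum.cong simp: assms mult.commute mult.left_commute)

lemma bilin_add_smult:
  assumes "\<And>i j. i \<in> K \<Longrightarrow> j \<in> K \<Longrightarrow> A i j = A j i"
  shows "bilin K A (\<lambda>i. x i + t * y i) (\<lambda>i. x i + t * y i)
         = bilin K A x x + 2 * t * bilin K A x y + t\<^sup>2 * bilin K A y y"
proof -
  have "bilin K A (\<lambda>i. x i + t * y i) (\<lambda>i. x i + t * y i)
        = bilin K A x x + t * bilin K A x y + t * bilin K A y x + t\<^sup>2 * bilin K A y y"
    unfolding bilin_def mulv_def
    by (simp add: algebra_simps sum.distrib sum_distrib_left power2_eq_square)
  then show ?thesis
    using bilin_commute[OF assms, where x = y and y = x] by simp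
qed

lemma abs_bilin_le:
  assumes "finite K"
  shows "\<bar>bilin K A x x\<bar> \<le> (\<Sum>i\<in>K. \<Sum>j\<in>K. \<bar>A i j\<bar>) * sqnorm K x"
proof -
  have entry: "\<bar>x i * A i j * x j\<bar> \<le> \<bar>A i j\<bar> * sqnorm K x" if "i \<in> K" "j \<in> K" for i j
  proof -
    have "(x i)\<^sup>2 \<le> sqnorm K x" "(x j)\<^sup>2 \<le> sqnorm K x"
      unfolding sqnorm_def using assms that
      by (auto intro: member_le_sum[where f = "\<lambda>i. (x i)\<^sup>2"])
    moreover have "2 * \<bar>x i\<bar> * \<bar>x j\<bar> \<le> (x i)\<^sup>2 + (x j)\<^sup>2"
      using sum_squares_bound[of "\<bar>x i\<bar>" "\<bar>x j\<bar>"] by (simp add: power2_eq_square)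
    ultimately have "\<bar>x i * x j\<bar> \<le> sqnorm K x"
      by (simp add: abs_mult)
    then have "\<bar>x i * x j\<bar> * \<bar>A i j\<bar> \<le> sqnorm K x * \<bar>A i j\<bar>"
      by (rule mult_right_mono) simp
    then show ?thesis
      by (simp add: abs_mult mult.commute mult.left_commute)
  qed
  have "\<bar>bilin K A x x\<bar> \<le> (\<Sum>i\<in>K. \<Sum>j\<in>K. \<bar>x i * A i j * x j\<bar>)"
    unfolding bilin_def mulv_def sum_distrib_left mult.assoc[symmetric]
    by (rule order_trans[OF sum_abs]) (intro sum_mono sum_abs)
  also have "\<dots> \<le> (\<Sum>i\<in>K. \<Sum>j\<in>K. \<bar>A i j\<bar> * sqnorm K x)"
    by (intro sum_mono entry)
  finally show ?thesis
    by (simp add: sum_distrib_right)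
qed

lemma bilin_eq_on_support:
  assumes "finite K" "J \<subseteq> K"
    and "\<And>i. i \<in> K - J \<Longrightarrow> x i = 0" "\<And>i. i \<in> K - J \<Longrightarrow> y i = 0"
  shows "bilin K A x y = bilin J A x y"
proof -
  have "mulv K A y i = mulv J A y i" for i
    unfolding mulv_def using assms by (intro sum.mono_neutral_right) auto
  then show ?thesis
    unfolding bilin_def using assms by (auto intro: sum.mono_neutral_right)
qed

lemma sqnorm_eq_on_support:
  assumes "finite K" "J \<subseteq> K" "\<And>i. i \<in> K - J \<Longrightarrow> x i = 0"
  shows "sqnorm K x = sqnorm J x"
  unfolding sqnorm_def using assms by (intro sum.mono_neutral_right) auto

subsection \<open>Invertibility and the smallest eigenvalue\<close>

lemma right_inverse_if_injective:
  assumes inj: "\<And>v. \<forall>i<p. mulv {..<p} A v i = 0 \<Longrightarrow> \<forall>i<p. v i = 0"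
  shows "\<exists>B. \<forall>i<p. \<forall>k<p. mulv {..<p} A (\<lambda>j. B j k) i = (if i = k then 1 else 0)"
proof -
  define M where "M = mat p p (\<lambda>(i, j). A i j)"
  have M: "M \<in> carrier_mat p p"
    unfolding M_def by simp
  have entry: "(M * N) $$ (i, k) = mulv {..<p} A (\<lambda>j. N $$ (j, k)) i"
    if "N \<in> carrier_mat p p" "i < p" "k < p" for N i k
    using that unfolding M_def mulv_def
    by (auto simp: scalar_prod_def lessThan_atLeast0 intro!: sum.cong)
  have det: "Determinant.det M \<noteq> 0"
  proof
    assume "Determinant.det M = 0"
    then obtain v where v: "v \<in> carrier_vec p" "v \<noteq> 0\<^sub>v p" "M *\<^sub>v v = 0\<^sub>v p"
      using det_0_iff_vec_prod_zero_field[OF M] by auto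
    have "mulv {..<p} A (vec_index v) i = vec_index (M *\<^sub>v v) i" if "i < p" for i
      using that v(1) unfolding M_def mulv_def
      by (auto simp: scalar_prod_def lessThan_atLeast0 intro!: sum.cong)
    then have "\<forall>i<p. mulv {..<p} A (vec_index v) i = 0"
      using v(3) by simp
    then have "\<forall>i<p. vec_index v i = 0"
      by (rule inj)
    then have "v = 0\<^sub>v p"
      using v(1) by (intro eq_vecI) auto
    with v(2) show False ..
  qed
  have "mulv {..<p} A (\<lambda>j. adj_mat M $$ (j, k) / Determinant.det M) i = (if i = k then 1 else 0)"
    if "i < p" "k < p" for i k
  proof -
    have "mulv {..<p} A (\<lambda>j. adj_mat M $$ (j, k)) i = Determinant.det M * (if i = k then 1 else 0)"
      using entry[OF adj_mat(1)[OF M] that, symmetric] adj_mat(2)[OF M] that by simp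
    then show ?thesis
      using det unfolding mulv_def by (simp add: sum_divide_distrib[symmetric])
  qed
  then show ?thesis
    by (intro exI[of _ "\<lambda>j k. adj_mat M $$ (j, k) / Determinant.det M"]) blast
qed

lemma mulv_right_inverse:
  assumes B: "\<forall>i<p. \<forall>k<p. mulv {..<p} A (\<lambda>j. B j k) i = (if i = k then 1 else 0)"
    and "i < p"
  shows "mulv {..<p} A (mulv {..<p} B x) i = x i"
proof -
  have "mulv {..<p} A (mulv {..<p} B x) i = (\<Sum>k<p. mulv {..<p} A (\<lambda>j. B j k) i * x k)"
    unfolding mulv_def sum_distrib_left sum_distrib_right
    by (subst sum.swap) (simp add: mult.assoc)
  also have "\<dots> = (\<Sum>k<p. if i = k then x k else 0)"
    using B \<open>i < p\<close> by (intro sum.cong) auto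
  also have "\<dots> = x i"
    using \<open>i < p\<close> by simp
  finally show ?thesis .
qed

lemma coercive_if_psd_injective:
  assumes sym: "symmetric_mat p A" and psd: "\<And>x. 0 \<le> bilin {..<p} A x x"
    and inj: "\<And>v. \<forall>i<p. mulv {..<p} A v i = 0 \<Longrightarrow> \<forall>i<p. v i = 0"
  shows "\<exists>\<epsilon>>0. \<forall>x. \<epsilon> * sqnorm {..<p} x \<le> bilin {..<p} A x x"
proof -
  have symK: "A i j = A j i" if "i \<in> {..<p}" "j \<in> {..<p}" for i j
    using sym that unfolding symmetric_mat_def by auto
  obtain B where B: "\<forall>i<p. \<forall>k<p. mulv {..<p} A (\<lambda>j. B j k) i = (if i = k then 1 else 0)"
    using right_inverse_if_injective inj by blast
  define L where "L = (\<Sum>i<p. \<Sum>j<p. \<bar>B i j\<bar>)"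
  define \<epsilon> where "\<epsilon> = 1 / (L + 1)"
  have "0 \<le> L"
    unfolding L_def by (simp add: sum_nonneg)
  then have \<epsilon>: "0 < \<epsilon>" "\<epsilon> * L \<le> 1"
    unfolding \<epsilon>_def by (auto simp: field_simps)
  have "\<epsilon> * sqnorm {..<p} x \<le> bilin {..<p} A x x" for x
  proof -
    define y where "y = mulv {..<p} B x"
    have Ay: "mulv {..<p} A y i = x i" if "i < p" for i
      unfolding y_def using mulv_right_inverse[OF B that] .
    have xy: "bilin {..<p} A x y = sqnorm {..<p} x"
      unfolding bilin_def sqnorm_def by (simp add: Ay power2_eq_square)
    have "bilin {..<p} A y y = (\<Sum>i<p. y i * x i)"
      unfolding bilin_def by (intro sum.cong) (simp_all add: Ay)
    also have "\<dots> = bilin {..<p} B x x"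
      unfolding bilin_def y_def by (simp add: mult.commute)
    also have "\<dots> \<le> L * sqnorm {..<p} x"
      using abs_bilin_le[of "{..<p}" B x] unfolding L_def by simp
    finally have "\<epsilon>\<^sup>2 * bilin {..<p} A y y \<le> \<epsilon> * (\<epsilon> * L) * sqnorm {..<p} x"
      using mult_left_mono[of _ _ "\<epsilon>\<^sup>2"] by (simp add: power2_eq_square mult.assoc)
    also have "\<dots> \<le> \<epsilon> * 1 * sqnorm {..<p} x"
      using \<epsilon> sqnorm_nonneg by (intro mult_right_mono mult_left_mono) auto
    finally have yy: "\<epsilon>\<^sup>2 * bilin {..<p} A y y \<le> \<epsilon> * sqnorm {..<p} x"
      by simp
    have "0 \<le> bilin {..<p} A (\<lambda>i. x i + (- \<epsilon>) * y i) (\<lambda>i. x i + (- \<epsilon>) * y i)"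
      by (rule psd)
    also have "\<dots> = bilin {..<p} A x x - 2 * \<epsilon> * sqnorm {..<p} x + \<epsilon>\<^sup>2 * bilin {..<p} A y y"
      using bilin_add_smult[of "{..<p}" A, OF symK, of x "- \<epsilon>" y] xy by simp
    finally show ?thesis
      using yy by simp
  qed
  with \<epsilon> show ?thesis
    by blast
qed

lemma mulv_shift:
  assumes "finite K" "i \<in> K"
  shows "mulv K (\<lambda>i j. A i j - (if i = j then m else 0)) v i = mulv K A v i - m * v i"
proof -
  have "mulv K (\<lambda>i j. A i j - (if i = j then m else 0)) v i
        = mulv K A v i - (\<Sum>j\<in>K. if i = j then m * v j else 0)"
    unfolding mulv_def by (subst sum_subtractf[symmetric]) (auto intro!: sum.cong simp: algebra_simps)
  then show ?thesis
    using assms by simp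
qed

lemma bilin_shift:
  "finite K \<Longrightarrow> bilin K (\<lambda>i j. A i j - (if i = j then m else 0)) x x = bilin K A x x - m * sqnorm K x"
  unfolding bilin_def sqnorm_def
  by (simp add: mulv_shift right_diff_distrib sum_subtractf sum_distrib_left power2_eq_square
      mult.left_commute)

lemma injective_shift_if_not_eigenvalue:
  assumes "\<not> is_eigenvalue p A m"
    and "\<forall>i<p. mulv {..<p} (\<lambda>i j. A i j - (if i = j then m else 0)) v i = 0"
  shows "\<forall>i<p. v i = 0"
proof (rule ccontr)
  assume nonzero: "\<not> (\<forall>i<p. v i = 0)"
  define v' where "v' = (\<lambda>i. if i < p then v i else 0)"
  have "(\<Sum>j<p. A i j * v' j) = mulv {..<p} A v i" for i
    unfolding v'_def mulv_def by (rule sum.cong) auto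
  then have "is_eigenvalue p A m"
    unfolding is_eigenvalue_def using nonzero assms(2)
    by (intro exI[of _ v']) (auto simp: v'_def mulv_shift)
  with assms(1) show False ..
qed

lemma greatest_rayleigh_lower_bound:
  assumes "0 < p"
  shows "\<exists>m. (\<forall>x. m * sqnorm {..<p} x \<le> bilin {..<p} A x x)
             \<and> (\<forall>\<mu>. (\<forall>x. \<mu> * sqnorm {..<p} x \<le> bilin {..<p} A x x) \<longrightarrow> \<mu> \<le> m)"
proof -
  define T where "T = {\<mu>. \<forall>x. \<mu> * sqnorm {..<p} x \<le> bilin {..<p} A x x}"
  have "- (\<Sum>i<p. \<Sum>j<p. \<bar>A i j\<bar>) * sqnorm {..<p} x \<le> bilin {..<p} A x x" for x
    using abs_bilin_le[of "{..<p}" A x] by (simp add: abs_le_iff)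
  then have T: "T \<noteq> {}"
    unfolding T_def by blast
  define e0 :: "nat \<Rightarrow> real" where "e0 = (\<lambda>i. of_bool (i = 0))"
  have "{..<p} \<inter> {i. i = 0} = {0}"
    using assms by auto
  then have "sqnorm {..<p} e0 = 1" "bilin {..<p} A e0 e0 = A 0 0"
    unfolding sqnorm_def bilin_def mulv_def e0_def by (simp_all add: power2_eq_square)
  then have bdd: "bdd_above T"
    unfolding T_def by (intro bdd_aboveI[of _ "A 0 0"]) (metis (mono_tags) mem_Collect_eq mult_1_right)
  have "Sup T * sqnorm {..<p} x \<le> bilin {..<p} A x x" for x
  proof (cases "sqnorm {..<p} x = 0")
    case True
    then have "\<forall>i<p. x i = 0"
      unfolding sqnorm_def by (subst (asm) sum_nonneg_eq_0_iff) auto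
    then have "bilin {..<p} A x x = 0"
      unfolding bilin_def by simp
    with True show ?thesis
      by simp
  next
    case False
    then have pos: "0 < sqnorm {..<p} x"
      using sqnorm_nonneg[of "{..<p}" x] by linarith
    have "Sup T \<le> bilin {..<p} A x x / sqnorm {..<p} x"
      using T pos unfolding T_def by (intro cSup_least) (auto simp: pos_le_divide_eq)
    with pos show ?thesis
      by (simp add: pos_le_divide_eq)
  qed
  moreover have "\<mu> \<le> Sup T" if "\<forall>x. \<mu> * sqnorm {..<p} x \<le> bilin {..<p} A x x" for \<mu>
    using bdd that unfolding T_def by (intro cSup_upper) auto
  ultimately show ?thesis
    by blast
qed

(* The best constant m in  m |x|^2 \<le> x^T A x  is an eigenvalue: otherwise A - m I is
   positive semidefinite and injective, hence coercive, and m could be increased. *)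
lemma rayleigh_ge_if_eigenvalues_ge:
  assumes sym: "symmetric_mat p A" and eig: "\<And>\<mu>. is_eigenvalue p A \<mu> \<Longrightarrow> c \<le> \<mu>"
  shows "c * sqnorm {..<p} x \<le> bilin {..<p} A x x"
proof (cases "p = 0")
  case True
  then show ?thesis
    by (simp add: sqnorm_def bilin_def)
next
  case False
  then obtain m where m: "\<forall>x. m * sqnorm {..<p} x \<le> bilin {..<p} A x x"
    and greatest: "\<And>\<mu>. \<forall>x. \<mu> * sqnorm {..<p} x \<le> bilin {..<p} A x x \<Longrightarrow> \<mu> \<le> m"
    using greatest_rayleigh_lower_bound[of p A] by blast
  define A' where "A' = (\<lambda>i j. A i j - (if i = j then m else 0))"
  have "is_eigenvalue p A m"
  proof (rule ccontr)
    assume "\<not> is_eigenvalue p A m"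
    moreover have "symmetric_mat p A'"
      using sym unfolding symmetric_mat_def A'_def by auto
    moreover have "0 \<le> bilin {..<p} A' x x" for x
      using m bilin_shift[of "{..<p}" A m x] unfolding A'_def by simp
    ultimately obtain \<epsilon> where "0 < \<epsilon>" and "\<forall>x. \<epsilon> * sqnorm {..<p} x \<le> bilin {..<p} A' x x"
      using coercive_if_psd_injective[of p A'] injective_shift_if_not_eigenvalue
      unfolding A'_def by blast
    then have "m + \<epsilon> \<le> m"
      using bilin_shift[of "{..<p}" A m] unfolding A'_def by (intro greatest) (simp add: algebra_simps)
    with \<open>0 < \<epsilon>\<close> show False
      by simp
  qed
  then have "c * sqnorm {..<p} x \<le> m * sqnorm {..<p} x"
    using eig sqnorm_nonneg by (simp add: mult_right_mono)
  with m show ?thesis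
    by (meson order_trans)
qed

subsection \<open>The block \<Sigma>_{-1,-1}\<close>

lemma SmulR_eq_mulv: "SmulR p S v i = mulv {1..<p} S v i"
  unfolding SmulR_def mulv_def ..

lemma SmulR_diff: "SmulR p S (\<lambda>i. a i - b i) j = SmulR p S a j - SmulR p S b j"
  unfolding SmulR_def by (simp add: sum_subtractf right_diff_distrib)

lemma quadS_eq_bilin: "quadS p S v = bilin {1..<p} S v v"
  unfolding quadS_def bilin_def mulv_def by (simp add: sum_distrib_left mult.assoc)

lemma rvec_diff: "a \<in> rvec p \<Longrightarrow> b \<in> rvec p \<Longrightarrow> (\<lambda>i. a i - b i) \<in> rvec p"
  unfolding rvec_def by auto

lemma quadS_ge_if_eigenvalues_ge:
  assumes sym: "symmetric_mat p S" and eig: "\<And>\<mu>. is_eigenvalue p S \<mu> \<Longrightarrow> c \<le> \<mu>"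
    and v: "v \<in> rvec p"
  shows "c * sqnorm {1..<p} v \<le> quadS p S v"
proof -
  have "\<And>i. i \<in> {..<p} - {1..<p} \<Longrightarrow> v i = 0"
    using v unfolding rvec_def by auto
  then have "quadS p S v = bilin {..<p} S v v" "sqnorm {1..<p} v = sqnorm {..<p} v"
    unfolding quadS_eq_bilin
    by (intro bilin_eq_on_support[symmetric] sqnorm_eq_on_support[symmetric]; auto)+
  then show ?thesis
    using rayleigh_ge_if_eigenvalues_ge[OF sym eig] by simp
qed

lemma quadS_nonneg:
  assumes "symmetric_mat p S" "\<And>\<mu>. is_eigenvalue p S \<mu> \<Longrightarrow> c \<le> \<mu>" "0 \<le> c" "v \<in> rvec p"
  shows "0 \<le> quadS p S v"
proof -
  have "0 \<le> c * sqnorm {1..<p} v"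
    using assms(3) sqnorm_nonneg by simp
  also have "\<dots> \<le> quadS p S v"
    by (rule quadS_ge_if_eigenvalues_ge[OF assms(1,2,4)])
  finally show ?thesis .
qed

lemma rvec_eq_zero_if_SmulR_eq_zero:
  assumes sym: "symmetric_mat p S" and eig: "\<And>\<mu>. is_eigenvalue p S \<mu> \<Longrightarrow> c \<le> \<mu>" and "0 < c"
    and v: "v \<in> rvec p" and zero: "\<forall>i\<in>{1..<p}. SmulR p S v i = 0"
  shows "v = (\<lambda>_. 0)"
proof -
  have "quadS p S v = 0"
    using zero unfolding quadS_eq_bilin bilin_def by (simp add: SmulR_eq_mulv)
  then have "c * sqnorm {1..<p} v \<le> 0"
    using quadS_ge_if_eigenvalues_ge[OF sym eig v] by simp
  with \<open>0 < c\<close> have "sqnorm {1..<p} v \<le> 0"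
    by (simp add: mult_le_0_iff)
  then have "sqnorm {1..<p} v = 0"
    using sqnorm_nonneg by (rule antisym)
  then have "\<forall>i\<in>{1..<p}. v i = 0"
    unfolding sqnorm_def by (subst (asm) sum_nonneg_eq_0_iff) auto
  show ?thesis
  proof (rule ext)
    fix i
    show "v i = 0"
      using v \<open>\<forall>i\<in>{1..<p}. v i = 0\<close> unfolding rvec_def by (cases "i \<in> {1..<p}") auto
  qed
qed

(* Bordering \<Sigma>_{-1,-1} with a unit row and column turns the system on the coordinates
   1..p-1 into an injective p x p system, to which the right inverse applies. *)
lemma SmulR_surjective_if_injective:
  assumes inj: "\<And>v. v \<in> rvec p \<Longrightarrow> \<forall>i\<in>{1..<p}. SmulR p S v i = 0 \<Longrightarrow> v = (\<lambda>_. 0)"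
  shows "\<exists>g\<in>rvec p. \<forall>i\<in>{1..<p}. SmulR p S g i = b i"
proof -
  define A :: "nat \<Rightarrow> nat \<Rightarrow> real"
    where "A = (\<lambda>i j. if i = 0 \<or> j = 0 then of_bool (i = j) else S i j)"
  define trunc :: "(nat \<Rightarrow> real) \<Rightarrow> nat \<Rightarrow> real"
    where "trunc v = (\<lambda>j. if j \<in> {1..<p} then v j else 0)" for v
  have trunc: "trunc v \<in> rvec p" "SmulR p S (trunc v) i = SmulR p S v i" for v i
    unfolding trunc_def rvec_def SmulR_def by (auto intro!: sum.cong)
  have row0: "mulv {..<p} A v 0 = v 0" if "0 < p" for v
  proof -
    have "{..<p} \<inter> {j. 0 = j} = {0}"
      using that by auto
    then show ?thesis
      unfolding mulv_def A_def by simp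
  qed
  have row: "mulv {..<p} A v i = SmulR p S v i" if "i \<in> {1..<p}" for v i
  proof -
    have "{..<p} = insert 0 {1..<p}"
      using that by auto
    then show ?thesis
      using that unfolding mulv_def SmulR_def A_def by (auto intro!: sum.cong)
  qed
  have "\<forall>i<p. v i = 0" if zero: "\<forall>i<p. mulv {..<p} A v i = 0" for v
  proof -
    have "trunc v = (\<lambda>_. 0)"
      using zero by (intro inj) (auto simp: trunc row)
    show ?thesis
    proof (intro allI impI)
      fix i
      assume "i < p"
      show "v i = 0"
      proof (cases "i = 0")
        case True
        with \<open>i < p\<close> zero row0 show ?thesis
          by auto
      next
        case False
        have "trunc v i = 0"
          using \<open>trunc v = (\<lambda>_. 0)\<close> by simp
        with False \<open>i < p\<close> show ?thesis
          unfolding trunc_def by simp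
      qed
    qed
  qed
  then obtain B where B: "\<forall>i<p. \<forall>k<p. mulv {..<p} A (\<lambda>j. B j k) i = (if i = k then 1 else 0)"
    using right_inverse_if_injective by blast
  define g where "g = trunc (mulv {..<p} B b)"
  have "SmulR p S g i = b i" if "i \<in> {1..<p}" for i
    using mulv_right_inverse[OF B] that unfolding g_def by (simp add: trunc row[symmetric])
  with trunc show ?thesis
    unfolding g_def by blast
qed

lemma gamma0_spec:
  assumes sym: "symmetric_mat p S" and eig: "\<And>\<mu>. is_eigenvalue p S \<mu> \<Longrightarrow> c \<le> \<mu>" and "0 < c"
  shows "gamma0 p S \<in> rvec p \<and> (\<forall>i\<in>{1..<p}. SmulR p S (gamma0 p S) i = S i 0)"
proof -
  note inj = rvec_eq_zero_if_SmulR_eq_zero[OF sym eig \<open>0 < c\<close>]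
  obtain g where g: "g \<in> rvec p" "\<forall>i\<in>{1..<p}. SmulR p S g i = S i 0"
    using SmulR_surjective_if_injective[OF inj, where b = "\<lambda>i. S i 0"] by blast
  have unique: "g' = g" if "g' \<in> rvec p \<and> (\<forall>i\<in>{1..<p}. SmulR p S g' i = S i 0)" for g'
  proof -
    have "(\<lambda>i. g' i - g i) = (\<lambda>_. 0)"
      using that g by (intro inj rvec_diff) (auto simp: SmulR_diff)
    then show ?thesis
      by (simp add: fun_eq_iff)
  qed
  show ?thesis
    unfolding gamma0_def by (rule theI[where a = g]) (use g unique in blast)+
qed

subsection \<open>The noiseless Lasso\<close>

(* E x_i (x_{-1} c - x_1), half the i-th partial derivative of the risk. *)
definition resid_cov :: "nat \<Rightarrow> (nat \<Rightarrow> nat \<Rightarrow> real) \<Rightarrow> (nat \<Rightarrow> real) \<Rightarrow> nat \<Rightarrow> real" where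
  "resid_cov p S c i = SmulR p S c i - S i 0"

lemma norm1_nonneg: "0 \<le> norm1 p v"
  unfolding norm1_def by (simp add: sum_nonneg)

lemma normInf_le_iff: "0 \<le> l \<Longrightarrow> normInf p v \<le> l \<longleftrightarrow> (\<forall>i\<in>{1..<p}. \<bar>v i\<bar> \<le> l)"
  unfolding normInf_def by (subst Max_le_iff) auto

lemma normInf_SmulR_gamma0_le_iff:
  assumes "\<forall>i\<in>{1..<p}. SmulR p S (gamma0 p S) i = S i 0" and "0 \<le> l"
  shows "normInf p (SmulR p S (\<lambda>i. g i - gamma0 p S i)) \<le> l
         \<longleftrightarrow> (\<forall>i\<in>{1..<p}. \<bar>resid_cov p S g i\<bar> \<le> l)"
  using assms by (simp add: normInf_le_iff SmulR_diff resid_cov_def)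

lemma risk_add_smult:
  assumes sym: "symmetric_mat p S"
  shows "risk p S (\<lambda>j. g j + t * w j)
         = risk p S g + 2 * t * (\<Sum>j\<in>{1..<p}. w j * resid_cov p S g j) + t\<^sup>2 * quadS p S w"
proof -
  have symI: "S i j = S j i" if "i \<in> {1..<p}" "j \<in> {1..<p}" for i j
    using sym that unfolding symmetric_mat_def by auto
  have "(\<Sum>j\<in>{1..<p}. w j * resid_cov p S g j) = bilin {1..<p} S w g - (\<Sum>j\<in>{1..<p}. w j * S j 0)"
    unfolding resid_cov_def bilin_def SmulR_eq_mulv by (simp add: right_diff_distrib sum_subtractf)
  also have "\<dots> = bilin {1..<p} S g w - (\<Sum>j\<in>{1..<p}. w j * S j 0)"
    using bilin_commute[of "{1..<p}" S, OF symI] by simp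
  finally have lin: "(\<Sum>j\<in>{1..<p}. w j * resid_cov p S g j)
                     = bilin {1..<p} S g w - (\<Sum>j\<in>{1..<p}. w j * S j 0)" .
  have quad: "quadS p S (\<lambda>j. g j + t * w j)
              = quadS p S g + 2 * t * bilin {1..<p} S g w + t\<^sup>2 * quadS p S w"
    unfolding quadS_eq_bilin by (rule bilin_add_smult) (rule symI)
  show ?thesis
    unfolding risk_def quad lin by (simp add: algebra_simps sum.distrib sum_distrib_left)
qed

lemma abs_le_if_quadratic_nonneg:
  fixes u l :: real
  assumes "\<And>t. 0 \<le> 2 * t * u + t\<^sup>2 + 2 * l * \<bar>t\<bar>"
  shows "\<bar>u\<bar> \<le> l"
proof -
  have upper: "u \<le> l" if nonneg: "\<And>t. 0 \<le> 2 * t * u + t\<^sup>2 + 2 * l * \<bar>t\<bar>" for u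
  proof (rule ccontr)
    assume "\<not> u \<le> l"
    then have "2 * (l - u) * u + (l - u)\<^sup>2 + 2 * l * \<bar>l - u\<bar> = - (u - l)\<^sup>2"
      by (simp add: power2_eq_square algebra_simps)
    moreover have "0 < (u - l)\<^sup>2"
      using \<open>\<not> u \<le> l\<close> by simp
    ultimately show False
      using nonneg[of "l - u"] by linarith
  qed
  have "- u \<le> l"
  proof (rule upper)
    fix t :: real
    show "0 \<le> 2 * t * - u + t\<^sup>2 + 2 * l * \<bar>t\<bar>"
      using assms[of "- t"] by simp
  qed
  with upper[OF assms] show ?thesis
    by simp
qed

(* KKT condition: perturb the minimiser along the i-th coordinate. *)
lemma lasso_resid_cov_bound:
  assumes sym: "symmetric_mat p S" and diag: "\<And>i. i < p \<Longrightarrow> S i i = 1" and "0 \<le> lam"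
    and g: "g \<in> rvec p"
    and gmin: "\<And>x. x \<in> rvec p \<Longrightarrow>
        risk p S g + 2 * lam * norm1 p g \<le> risk p S x + 2 * lam * norm1 p x"
    and i: "i \<in> {1..<p}"
  shows "\<bar>resid_cov p S g i\<bar> \<le> lam"
proof (rule abs_le_if_quadratic_nonneg)
  fix t :: real
  define e :: "nat \<Rightarrow> real" where "e = (\<lambda>j. of_bool (j = i))"
  have I: "{1..<p} \<inter> {j. j = i} = {i}"
    using i by auto
  have "(\<lambda>j. g j + t * e j) \<in> rvec p"
    using g i unfolding rvec_def e_def by auto
  then have "risk p S g + 2 * lam * norm1 p g
             \<le> risk p S (\<lambda>j. g j + t * e j) + 2 * lam * norm1 p (\<lambda>j. g j + t * e j)"
    by (rule gmin)
  moreover have "quadS p S e = 1"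
  proof -
    have "quadS p S e = (\<Sum>a\<in>{1..<p}. e a * mulv {1..<p} S e a)"
      unfolding quadS_eq_bilin bilin_def ..
    also have "\<dots> = mulv {1..<p} S e i"
      using I by (simp add: e_def)
    also have "\<dots> = 1"
      using I diag i by (simp add: mulv_def e_def)
    finally show ?thesis .
  qed
  moreover have "(\<Sum>j\<in>{1..<p}. e j * resid_cov p S g j) = resid_cov p S g i"
    using I by (simp add: e_def)
  ultimately have "risk p S g + 2 * lam * norm1 p g
                   \<le> risk p S g + 2 * t * resid_cov p S g i + t\<^sup>2 + 2 * lam * norm1 p (\<lambda>j. g j + t * e j)"
    unfolding risk_add_smult[OF sym] by simp
  moreover have "norm1 p (\<lambda>j. g j + t * e j) \<le> norm1 p g + \<bar>t\<bar>"
  proof -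
    have "norm1 p (\<lambda>j. g j + t * e j) \<le> (\<Sum>j\<in>{1..<p}. \<bar>g j\<bar> + \<bar>t\<bar> * e j)"
      unfolding norm1_def by (intro sum_mono) (auto simp: e_def abs_triangle_ineq)
    also have "\<dots> = norm1 p g + \<bar>t\<bar>"
      using I unfolding norm1_def e_def by (simp add: sum.distrib)
    finally show ?thesis .
  qed
  moreover from this have "lam * norm1 p (\<lambda>j. g j + t * e j) \<le> lam * norm1 p g + lam * \<bar>t\<bar>"
    using mult_left_mono \<open>0 \<le> lam\<close> by (fastforce simp: distrib_left)
  ultimately show "0 \<le> 2 * t * resid_cov p S g i + t\<^sup>2 + 2 * lam * \<bar>t\<bar>"
    by linarith
qed

lemma lasso_basic_inequality:
  assumes sym: "symmetric_mat p S" and s: "s \<in> rvec p"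
    and gmin: "\<And>x. x \<in> rvec p \<Longrightarrow>
        risk p S g + 2 * lam * norm1 p g \<le> risk p S x + 2 * lam * norm1 p x"
    and "0 \<le> l" and resid_s: "\<And>i. i \<in> {1..<p} \<Longrightarrow> \<bar>resid_cov p S s i\<bar> \<le> l"
  shows "quadS p S (\<lambda>i. g i - s i) + 2 * lam * norm1 p g
         \<le> 2 * lam * norm1 p s + 2 * l * (norm1 p g + norm1 p s)"
proof -
  define d where "d = (\<lambda>i. g i - s i)"
  define X where "X = (\<Sum>j\<in>{1..<p}. d j * resid_cov p S s j)"
  have "(\<lambda>j. s j + 1 * d j) = g"
    unfolding d_def by simp
  then have "risk p S g = risk p S s + 2 * X + quadS p S d"
    using risk_add_smult[OF sym, of s 1 d] unfolding X_def by simp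
  moreover have "\<bar>X\<bar> \<le> l * (norm1 p g + norm1 p s)"
  proof -
    have "\<bar>X\<bar> \<le> (\<Sum>j\<in>{1..<p}. \<bar>d j\<bar> * l)"
      unfolding X_def
      by (rule order_trans[OF sum_abs], intro sum_mono) (simp add: abs_mult mult_left_mono resid_s)
    also have "\<dots> = l * norm1 p d"
      unfolding norm1_def by (simp add: sum_distrib_left mult.commute)
    also have "\<dots> \<le> l * (norm1 p g + norm1 p s)"
      unfolding norm1_def d_def using \<open>0 \<le> l\<close>
      by (intro mult_left_mono) (simp_all add: sum.distrib[symmetric] sum_mono abs_triangle_ineq4)
    finally show ?thesis .
  qed
  moreover have "risk p S g + 2 * lam * norm1 p g \<le> risk p S s + 2 * lam * norm1 p s"
    by (rule gmin[OF s])
  ultimately show ?thesis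
    unfolding d_def by (simp add: abs_le_iff algebra_simps)
qed

lemma lasso_error_bounds:
  assumes sym: "symmetric_mat p S" and eig: "\<And>\<mu>. is_eigenvalue p S \<mu> \<Longrightarrow> c \<le> \<mu>" and "0 \<le> c"
    and s: "s \<in> rvec p" and g: "g \<in> rvec p"
    and gmin: "\<And>x. x \<in> rvec p \<Longrightarrow>
        risk p S g + 2 * lam * norm1 p g \<le> risk p S x + 2 * lam * norm1 p x"
    and "0 \<le> l" "l \<le> lam" and resid_s: "\<And>i. i \<in> {1..<p} \<Longrightarrow> \<bar>resid_cov p S s i\<bar> \<le> l"
  shows "0 \<le> quadS p S (\<lambda>i. g i - s i)"
    and "quadS p S (\<lambda>i. g i - s i) \<le> 4 * (lam * norm1 p s)"
    and "2 * l \<le> lam \<Longrightarrow> lam * norm1 p g \<le> 3 * (lam * norm1 p s)"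
proof -
  have basic: "quadS p S (\<lambda>i. g i - s i) + 2 * lam * norm1 p g
               \<le> 2 * lam * norm1 p s + 2 * l * (norm1 p g + norm1 p s)"
    by (rule lasso_basic_inequality[OF sym s gmin \<open>0 \<le> l\<close> resid_s])
  show Q: "0 \<le> quadS p S (\<lambda>i. g i - s i)"
    by (rule quadS_nonneg[OF sym eig \<open>0 \<le> c\<close> rvec_diff[OF g s]])
  have "l * norm1 p g \<le> lam * norm1 p g" "l * norm1 p s \<le> lam * norm1 p s"
    using \<open>l \<le> lam\<close> norm1_nonneg by (auto intro: mult_right_mono)
  with basic show "quadS p S (\<lambda>i. g i - s i) \<le> 4 * (lam * norm1 p s)"
    by (simp add: algebra_simps)
  assume "2 * l \<le> lam"
  then have "2 * l * norm1 p g \<le> lam * norm1 p g" "2 * l * norm1 p s \<le> lam * norm1 p s"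
    using norm1_nonneg by (auto intro: mult_right_mono)
  with basic Q show "lam * norm1 p g \<le> 3 * (lam * norm1 p s)"
    by (simp add: algebra_simps)
qed

theorem lemma3p2:
  fixes p :: "nat \<Rightarrow> nat" and S :: "nat \<Rightarrow> nat \<Rightarrow> nat \<Rightarrow> real"
    and gs gL :: "nat \<Rightarrow> nat \<Rightarrow> real" and ls lL :: "nat \<Rightarrow> real"
  assumes p_pos: "\<And>n. 0 < p n"
    and sym: "\<And>n. symmetric_mat (p n) (S n)"
    and diag: "\<And>n i. i < p n \<Longrightarrow> S n i i = 1"
    and nonsing: "\<And>n. nonsingular (p n) (S n)"
    and eig: "\<exists>c>0. \<forall>n \<mu>. is_eigenvalue (p n) (S n) \<mu> \<longrightarrow> c \<le> \<mu>"
    and elig: "eligible p S gs ls"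
    and lL_gt: "\<And>n. ls n < lL n"
    and lL_lim: "(\<lambda>n. lL n * norm1 (p n) (gs n)) \<longlonglongrightarrow> 0"
    and gL_mem: "\<And>n. gL n \<in> rvec (p n)"
    and gL_min: "\<And>n c. c \<in> rvec (p n) \<Longrightarrow>
        risk (p n) (S n) (gL n) + 2 * lL n * norm1 (p n) (gL n)
          \<le> risk (p n) (S n) c + 2 * lL n * norm1 (p n) c"
  shows "(\<lambda>n. quadS (p n) (S n) (\<lambda>i. gL n i - gs n i)) \<longlonglongrightarrow> 0
         \<and> ((\<forall>n. 2 * ls n \<le> lL n) \<longrightarrow> eligible p S gL lL)"
proof -
  obtain c where "0 < c" and eig_c: "\<And>n \<mu>. is_eigenvalue (p n) (S n) \<mu> \<Longrightarrow> c \<le> \<mu>"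
    using eig by blast
  have gamma0: "\<forall>i\<in>{1..<p n}. SmulR (p n) (S n) (gamma0 (p n) (S n)) i = S n i 0" for n
    using gamma0_spec[OF sym eig_c[of n] \<open>0 < c\<close>] by blast
  have gs: "gs n \<in> rvec (p n)" "0 < ls n" for n
    using elig unfolding eligible_def by auto
  have resid_gs: "\<bar>resid_cov (p n) (S n) (gs n) i\<bar> \<le> ls n" if "i \<in> {1..<p n}" for n i
    using elig that normInf_SmulR_gamma0_le_iff[OF gamma0 less_imp_le[OF gs(2)]]
    unfolding eligible_def by blast
  have bounds: "0 \<le> quadS (p n) (S n) (\<lambda>i. gL n i - gs n i)"
      "quadS (p n) (S n) (\<lambda>i. gL n i - gs n i) \<le> 4 * (lL n * norm1 (p n) (gs n))"
      "2 * ls n \<le> lL n \<Longrightarrow> lL n * norm1 (p n) (gL n) \<le> 3 * (lL n * norm1 (p n) (gs n))" for n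
    using lasso_error_bounds[OF sym eig_c[of n] less_imp_le[OF \<open>0 < c\<close>] gs(1) gL_mem gL_min
        less_imp_le[OF gs(2)] less_imp_le[OF lL_gt] resid_gs] by auto
  have "(\<lambda>n. quadS (p n) (S n) (\<lambda>i. gL n i - gs n i)) \<longlonglongrightarrow> 0"
    by (rule tendsto_sandwich[OF _ _ tendsto_const tendsto_mult_right_zero[OF lL_lim, of 4]])
      (use bounds(1,2) in \<open>auto simp: mult.commute\<close>)
  moreover have "eligible p S gL lL" if "\<forall>n. 2 * ls n \<le> lL n"
  proof -
    have "0 < lL n" for n
      using gs(2)[of n] lL_gt[of n] by linarith
    moreover have "normInf (p n) (SmulR (p n) (S n) (\<lambda>i. gL n i - gamma0 (p n) (S n) i)) \<le> lL n" for n
      using lasso_resid_cov_bound[OF sym diag less_imp_le[OF \<open>0 < lL n\<close>] gL_mem gL_min]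
        normInf_SmulR_gamma0_le_iff[OF gamma0 less_imp_le[OF \<open>0 < lL n\<close>]] by blast
    moreover have "(\<lambda>n. lL n * norm1 (p n) (gL n)) \<longlonglongrightarrow> 0"
    proof -
      have "0 \<le> lL n * norm1 (p n) (gL n)" for n
        using \<open>0 < lL n\<close> norm1_nonneg by simp
      then show ?thesis
        by (intro tendsto_sandwich[OF _ _ tendsto_const tendsto_mult_right_zero[OF lL_lim, of 3]])
          (use bounds(3) that in \<open>auto simp: mult.commute\<close>)
    qed
    ultimately show ?thesis
      unfolding eligible_def using gL_mem by blast
  qed
  ultimately show ?thesis
    by blast
qed

end
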